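(* Let $G$ be a tree on $k\ge 2$ vertices and $n\ge 1$. If $G$ has a perfect matching, then the number of perfect matchings of $\Gamma^G_n$ (with loops ignored and parallel edges counted as distinct edges) is $$2^{\frac{k}{2(k-1)}\left(k^n-2k^{n-1}+1\right)} ;$$ if $G$ has no perfect matching, then $\Gamma^G_n$ has no perfect matching.
   Context: Let $G=(V,E)$ be a finite tree with vertex set $V$ of size $k$, and fix an orientation of each edge, so that each edge becomes an ordered pair $e=(s,t)$. Each oriented edge $e=(s,t)$ acts on the set $V^*$ of finite words over the alphabet $V$ by the recursive rule: $e(\emptyset)=\emptyset$, $e(sw)=t\,e(w)$, $e(tw)=sw$, and $e(xw)=xw$ for $x\in V\setminus\{s,t\}$ (words are read left to right, $w\in V^*$). This action preserves word length. For $n\ge 1$, the Schreier graph $\Gamma_n^G$ is the multigraph with vertex set $V^n$ having, for each $u\in V^n$ and each oriented edge $e$ of $G$, one edge joining $u$ and $e(u)$, labelled $e$ (a loop if $e(u)=u$). A perfect matching of a graph is a set $M$ of non-loop edges such that every vertex is incident to exactly one edge of $M$. *)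

theory Defs
  imports Complex_Main
begin

(* Each undirected edge of the tree appears in exactly one
   orientation. *)
definition oriented_tree :: "'v set \<Rightarrow> ('v \<times> 'v) set \<Rightarrow> bool" where
  "oriented_tree V E \<longleftrightarrow>
     finite V \<and> E \<subseteq> V \<times> V \<and>
     (\<forall>(s,t)\<in>E. s \<noteq> t) \<and>
     (\<forall>(s,t)\<in>E. (t,s) \<notin> E) \<and>
     (\<forall>x\<in>V. \<forall>y\<in>V. (x,y) \<in> (E \<union> E\<inverse>)\<^sup>*) \<and>
     card E = card V - 1"

definition tree_has_perfect_matching :: "'v set \<Rightarrow> ('v \<times> 'v) set \<Rightarrow> bool" where
  "tree_has_perfect_matching V E \<longleftrightarrow>
     (\<exists>M\<subseteq>E. \<forall>v\<in>V. card {e\<in>M. v = fst e \<or> v = snd e} = 1)"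

fun act :: "'v \<times> 'v \<Rightarrow> 'v list \<Rightarrow> 'v list" where
  "act e [] = []"
| "act (s,t) (x # w) =
     (if x = s then t # act (s,t) w else if x = t then s # w else x # w)"

definition words :: "'v set \<Rightarrow> nat \<Rightarrow> 'v list set" where
  "words V n = {w. set w \<subseteq> V \<and> length w = n}"

(* edges of Gamma_n^G are indexed by pairs (u,e), u \<in> V^n, e \<in> E;
   the edge (u,e) joins u and act e u (a loop iff act e u = u) *)
definition schreier_edges :: "'v set \<Rightarrow> ('v \<times> 'v) set \<Rightarrow> nat \<Rightarrow> ('v list \<times> ('v \<times> 'v)) set" where
  "schreier_edges V E n = words V n \<times> E"

definition endpoints :: "'v list \<times> ('v \<times> 'v) \<Rightarrow> 'v list set" where
  "endpoints ue = {fst ue, act (snd ue) (fst ue)}"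

definition schreier_perfect_matching ::
  "'v set \<Rightarrow> ('v \<times> 'v) set \<Rightarrow> nat \<Rightarrow> ('v list \<times> ('v \<times> 'v)) set \<Rightarrow> bool" where
  "schreier_perfect_matching V E n M \<longleftrightarrow>
     M \<subseteq> schreier_edges V E n \<and>
     (\<forall>ue\<in>M. act (snd ue) (fst ue) \<noteq> fst ue) \<and>
     (\<forall>w\<in>words V n. card {ue\<in>M. w \<in> endpoints ue} = 1)"

end

theory Submission
  imports Defs "HOL-Library.FuncSet"
begin

(* Let M be a perfect matching of the Schreier graph. Each word starting with v is covered
   exactly once, and an M-edge labelled e covers one such word if v is an end of e and none
   otherwise; so the numbers of M-edges with each label form an edge weighting of the tree
   with all vertex sums k^(n-1). On a tree such a weighting only takes the values 0 and
   k^(n-1), hence the labels used by M form a perfect matching F of the tree, and F is unique.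
   Conversely M is given by choosing, for each e = (s,t) in F, a set of words that alternates
   along the orbits of e on the words starting with s or t. There e acts as the binary odometer
   on the maximal {s,t}-prefix, so every orbit has even length and contains exactly one word
   t^j x w with j > 0 and x not in {s,t}, or t^n. These are (k^n - 2 k^(n-1) + 1)/(k - 1) orbits, each
   admitting two alternating choices, and F has k/2 edges. *)

section \<open>The action of an edge on words\<close>

lemma length_act [simp]: "length (act (s,t) w) = length w"
  by (induction w) auto

lemma act_eq_Nil_iff [simp]: "act (s,t) w = [] \<longleftrightarrow> w = []"
  by (cases w) auto

lemma act_eq_self_iff: "s \<noteq> t \<Longrightarrow> act (s,t) w = w \<longleftrightarrow> w = [] \<or> hd w \<notin> {s,t}"
  by (cases w) auto

lemma hd_act: "s \<noteq> t \<Longrightarrow> w \<noteq> [] \<Longrightarrow> hd w \<in> {s,t} \<Longrightarrow> hd (act (s,t) w) = (if hd w = s then t else s)"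
  by (cases w) auto

lemma inj_act: "s \<noteq> t \<Longrightarrow> inj (act (s,t))"
proof (rule injI)
  fix u v assume "s \<noteq> t" "act (s,t) u = act (s,t) v"
  then show "u = v"
  proof (induction u arbitrary: v)
    case Nil then show ?case by (metis act_eq_Nil_iff)
  next
    case (Cons x u)
    then show ?case by (cases v) (auto split: if_splits)
  qed
qed

lemma act_in_words:
  assumes "w \<in> words V n" "s \<in> V" "t \<in> V"
  shows "act (s,t) w \<in> words V n"
proof -
  have "set w \<subseteq> V \<Longrightarrow> set (act (s,t) w) \<subseteq> V"
    using assms(2,3) by (induction w) auto
  with assms(1) show ?thesis
    by (simp add: words_def)
qed

lemma finite_words: "finite V \<Longrightarrow> finite (words V n)"
  unfolding words_def by (rule finite_lists_length_eq)

lemma card_words: "finite V \<Longrightarrow> card (words V n) = card V ^ n"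
  unfolding words_def by (rule card_lists_length_eq)

lemma words_Suc: "words V (Suc n) = (\<lambda>(x,w). x # w) ` (V \<times> words V n)"
  by (auto simp: words_def length_Suc_conv)

definition moved_words :: "'v set \<Rightarrow> nat \<Rightarrow> 'v \<times> 'v \<Rightarrow> 'v list set" where
  "moved_words V n e = {w \<in> words V n. act e w \<noteq> w}"

lemma moved_words_eq:
  "s \<noteq> t \<Longrightarrow> moved_words V n (s,t) = {w \<in> words V n. w \<noteq> [] \<and> hd w \<in> {s,t}}"
  by (auto simp: moved_words_def act_eq_self_iff)

lemma finite_moved_words: "finite V \<Longrightarrow> finite (moved_words V n e)"
  unfolding moved_words_def by (simp add: finite_words)

lemma act_in_moved_words:
  assumes "s \<in> V" "t \<in> V" "s \<noteq> t" "w \<in> moved_words V n (s,t)"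
  shows "act (s,t) w \<in> moved_words V n (s,t)"
  using assms act_in_words[of w V n s t] hd_act[of s t w] by (auto simp: moved_words_eq)

lemma hd_act_eq_iff:
  "s \<noteq> t \<Longrightarrow> w \<in> moved_words V n (s,t) \<Longrightarrow> hd (act (s,t) w) = t \<longleftrightarrow> hd w \<noteq> t"
  using hd_act[of s t w] by (auto simp: moved_words_eq)

lemma bij_act_moved_words:
  assumes "finite V" "s \<in> V" "t \<in> V" "s \<noteq> t"
  shows "bij_betw (act (s,t)) (moved_words V n (s,t)) (moved_words V n (s,t))"
proof -
  have "act (s,t) ` moved_words V n (s,t) = moved_words V n (s,t)"
    using assms act_in_moved_words inj_act[OF assms(4)]
    by (intro endo_inj_surj finite_moved_words) (auto intro: inj_on_subset)
  then show ?thesis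
    unfolding bij_betw_def using inj_on_subset[OF inj_act[OF assms(4)] subset_UNIV] by blast
qed

(* act (s,t) is the binary odometer on the maximal {s,t}-prefix (s = 0, t = 1, least
   significant digit first), so replacing that prefix by t's selects one word per orbit *)
fun orbit_rep :: "'v \<Rightarrow> 'v \<Rightarrow> 'v list \<Rightarrow> 'v list" where
  "orbit_rep s t [] = []"
| "orbit_rep s t (x # w) = (if x = s \<or> x = t then t # orbit_rep s t w else x # w)"

lemma orbit_rep_act [simp]: "orbit_rep s t (act (s,t) w) = orbit_rep s t w"
  by (induction w) auto

lemma orbit_rep_idem [simp]: "orbit_rep s t (orbit_rep s t w) = orbit_rep s t w"
  by (induction w) auto

lemma orbit_rep_in_moved_words:
  assumes "t \<in> V" "s \<noteq> t" "w \<in> moved_words V n (s,t)"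
  shows "orbit_rep s t w \<in> moved_words V n (s,t)" "hd (orbit_rep s t w) = t"
proof -
  have "set w \<subseteq> V \<Longrightarrow> set (orbit_rep s t w) \<subseteq> V" and "length (orbit_rep s t w) = length w"
    using assms(1) by (induction w) auto
  with assms show "orbit_rep s t w \<in> moved_words V n (s,t)" "hd (orbit_rep s t w) = t"
    by (cases w; auto simp: moved_words_eq words_def)+
qed

lemma funpow_act_Cons:
  assumes "x \<in> {s,t}" "s \<noteq> t"
  shows "(act (s,t) ^^ (2 * i)) (x # w) = x # (act (s,t) ^^ i) w"
proof (induction i)
  case (Suc i)
  have "(act (s,t) ^^ (2 * Suc i)) (x # w) = act (s,t) (act (s,t) ((act (s,t) ^^ (2 * i)) (x # w)))"
    by (simp add: numeral_2_eq_2)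
  also have "\<dots> = act (s,t) (act (s,t) (x # (act (s,t) ^^ i) w))"
    by (simp add: Suc)
  also have "\<dots> = x # (act (s,t) ^^ Suc i) w"
    using assms by auto
  finally show ?case .
qed simp

lemma funpow_act_orbit_rep: "s \<noteq> t \<Longrightarrow> \<exists>i. (act (s,t) ^^ i) (orbit_rep s t w) = w"
proof (induction w)
  case Nil
  show ?case by (metis funpow_0 orbit_rep.simps(1))
next
  case (Cons x w)
  then obtain i where i: "(act (s,t) ^^ i) (orbit_rep s t w) = w" by blast
  consider "x \<notin> {s,t}" | "x = t" | "x = s" by blast
  then show ?case
  proof cases
    case 1
    then show ?thesis by (intro exI[of _ 0]) auto
  next
    case 2
    then show ?thesis using funpow_act_Cons[of t s t i] Cons.prems i by (intro exI[of _ "2 * i"]) auto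
  next
    case 3
    then have "(act (s,t) ^^ Suc (2 * i)) (orbit_rep s t (x # w)) = s # w"
      using funpow_act_Cons[of t s t i] Cons.prems i by auto
    then show ?thesis using 3 by blast
  qed
qed

(* A plays the role of {u. (u,e) \<in> M}: each word w = act e u moved by e must lie on exactly one
   of the matching edges (w,e) and (u,e) *)
definition alternating :: "'v set \<Rightarrow> nat \<Rightarrow> 'v \<times> 'v \<Rightarrow> 'v list set \<Rightarrow> bool" where
  "alternating V n e A \<longleftrightarrow>
     A \<subseteq> moved_words V n e \<and> (\<forall>u\<in>moved_words V n e. act e u \<in> A \<longleftrightarrow> u \<notin> A)"

lemma alternating_iff_orbit_rep:
  assumes "alternating V n (s,t) A" "s \<in> V" "t \<in> V" "s \<noteq> t" "u \<in> moved_words V n (s,t)"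
  shows "u \<in> A \<longleftrightarrow> (hd u = t \<longleftrightarrow> orbit_rep s t u \<in> A)"
proof -
  define Q where "Q u \<longleftrightarrow> (u \<in> A \<longleftrightarrow> hd u = t)" for u
  have Q_act: "Q (act (s,t) v) = Q v" if "v \<in> moved_words V n (s,t)" for v
    using assms(1) that hd_act_eq_iff[OF assms(4) that] unfolding alternating_def Q_def by auto
  have Q_funpow: "Q ((act (s,t) ^^ i) v) = Q v \<and> (act (s,t) ^^ i) v \<in> moved_words V n (s,t)"
    if "v \<in> moved_words V n (s,t)" for v i
    using that by (induction i) (auto simp: Q_act act_in_moved_words assms(2-4))
  obtain i where "(act (s,t) ^^ i) (orbit_rep s t u) = u"
    using funpow_act_orbit_rep[OF assms(4)] by blast
  then have "Q u = Q (orbit_rep s t u)"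
    using Q_funpow orbit_rep_in_moved_words[OF assms(3-5)] by metis
  then show ?thesis
    using orbit_rep_in_moved_words(2)[OF assms(3-5)] unfolding Q_def by auto
qed

definition rep_words :: "'v set \<Rightarrow> nat \<Rightarrow> 'v \<Rightarrow> 'v \<Rightarrow> 'v list set" where
  "rep_words V n s t = {w \<in> words V n. orbit_rep s t w = w}"

definition orbit_extension :: "'v set \<Rightarrow> nat \<Rightarrow> 'v \<Rightarrow> 'v \<Rightarrow> 'v list set \<Rightarrow> 'v list set" where
  "orbit_extension V n s t B = {u \<in> moved_words V n (s,t). hd u = t \<longleftrightarrow> orbit_rep s t u \<in> B}"

lemma orbit_rep_in_rep_words:
  assumes "t \<in> V" "s \<noteq> t" "u \<in> moved_words V n (s,t)"
  shows "orbit_rep s t u \<in> rep_words V n s t \<inter> moved_words V n (s,t)"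
  using orbit_rep_in_moved_words(1)[OF assms] by (simp add: rep_words_def moved_words_def)

lemma alternating_orbit_extension:
  assumes "s \<in> V" "t \<in> V" "s \<noteq> t"
  shows "alternating V n (s,t) (orbit_extension V n s t B)"
proof -
  have "act (s,t) u \<in> orbit_extension V n s t B \<longleftrightarrow> u \<notin> orbit_extension V n s t B"
    if "u \<in> moved_words V n (s,t)" for u
    using that act_in_moved_words[OF assms that] hd_act_eq_iff[OF assms(3) that]
    by (auto simp: orbit_extension_def)
  then show ?thesis
    unfolding alternating_def orbit_extension_def by blast
qed

lemma orbit_extension_Int_rep_words:
  assumes "t \<in> V" "s \<noteq> t" "B \<subseteq> rep_words V n s t \<inter> moved_words V n (s,t)"
  shows "orbit_extension V n s t B \<inter> (rep_words V n s t \<inter> moved_words V n (s,t)) = B"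
proof -
  have "u \<in> orbit_extension V n s t B \<longleftrightarrow> u \<in> B" if "u \<in> rep_words V n s t \<inter> moved_words V n (s,t)" for u
  proof -
    have "orbit_rep s t u = u" "u \<in> moved_words V n (s,t)"
      using that by (auto simp: rep_words_def)
    moreover have "hd u = t"
      using orbit_rep_in_moved_words(2)[OF assms(1,2) \<open>u \<in> moved_words V n (s,t)\<close>] calculation(1)
      by simp
    ultimately show ?thesis
      by (simp add: orbit_extension_def)
  qed
  then show ?thesis
    using assms(3) by blast
qed

lemma orbit_extension_Int_rep_words_eq:
  assumes "alternating V n (s,t) A" "s \<in> V" "t \<in> V" "s \<noteq> t"
  shows "orbit_extension V n s t (A \<inter> (rep_words V n s t \<inter> moved_words V n (s,t))) = A"
proof (rule set_eqI)
  fix u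
  show "u \<in> orbit_extension V n s t (A \<inter> (rep_words V n s t \<inter> moved_words V n (s,t))) \<longleftrightarrow> u \<in> A"
  proof (cases "u \<in> moved_words V n (s,t)")
    case True
    then have "orbit_rep s t u \<in> rep_words V n s t \<inter> moved_words V n (s,t)"
      using orbit_rep_in_rep_words[OF assms(3,4)] by blast
    then show ?thesis
      using True alternating_iff_orbit_rep[OF assms True] by (simp add: orbit_extension_def)
  next
    case False
    then show ?thesis
      using assms(1) by (auto simp: orbit_extension_def alternating_def)
  qed
qed

lemma card_alternating:
  assumes "finite V" "s \<in> V" "t \<in> V" "s \<noteq> t"
  shows "card {A. alternating V n (s,t) A} = 2 ^ card (rep_words V n s t \<inter> moved_words V n (s,t))"
proof -
  let ?R = "rep_words V n s t \<inter> moved_words V n (s,t)"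
  have "bij_betw (\<lambda>A. A \<inter> ?R) {A. alternating V n (s,t) A} (Pow ?R)"
  proof (rule bij_betw_byWitness[where f' = "orbit_extension V n s t"])
    show "\<forall>A\<in>{A. alternating V n (s,t) A}. orbit_extension V n s t (A \<inter> ?R) = A"
      using orbit_extension_Int_rep_words_eq[OF _ assms(2-4)] by blast
    show "\<forall>B\<in>Pow ?R. orbit_extension V n s t B \<inter> ?R = B"
      using orbit_extension_Int_rep_words[OF assms(3,4)] by blast
    show "orbit_extension V n s t ` Pow ?R \<subseteq> {A. alternating V n (s,t) A}"
      using alternating_orbit_extension[OF assms(2-4)] by blast
  qed auto
  then have "card {A. alternating V n (s,t) A} = card (Pow ?R)"
    by (rule bij_betw_same_card)
  also have "\<dots> = 2 ^ card ?R"
    using finite_moved_words[OF assms(1)] by (intro card_Pow) blast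
  finally show ?thesis .
qed

lemma rep_words_Int_moved_words:
  "s \<noteq> t \<Longrightarrow> t \<in> V \<Longrightarrow>
   rep_words V (Suc m) s t \<inter> moved_words V (Suc m) (s,t) = (#) t ` rep_words V m s t"
  by (auto simp: moved_words_eq rep_words_def words_Suc split: if_splits)

lemma rep_words_Suc:
  "t \<in> V \<Longrightarrow> rep_words V (Suc m) s t =
     (\<lambda>(x,w). x # w) ` ((V - {s,t}) \<times> words V m) \<union> (#) t ` rep_words V m s t"
  by (auto simp: rep_words_def words_Suc split: if_splits)

lemma card_rep_words_Suc:
  assumes "finite V" "s \<in> V" "t \<in> V" "s \<noteq> t"
  shows "card (rep_words V (Suc m) s t) = (card V - 2) * card V ^ m + card (rep_words V m s t)"
proof -
  have "card ((\<lambda>(x,w). x # w) ` ((V - {s,t}) \<times> words V m)) = card (V - {s,t}) * card (words V m)"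
    by (simp add: card_image card_cartesian_product inj_on_def)
  also have "\<dots> = (card V - 2) * card V ^ m"
    using assms by (simp add: card_Diff_subset card_words numeral_2_eq_2)
  finally show ?thesis
    unfolding rep_words_Suc[OF assms(3)] using assms(1)
    by (subst card_Un_disjoint) (auto simp: card_image finite_words rep_words_def)
qed

lemma card_rep_words:
  assumes "finite V" "s \<in> V" "t \<in> V" "s \<noteq> t"
  shows "real (card (rep_words V m s t)) * (real (card V) - 1) =
         real (card V) ^ (m + 1) - 2 * real (card V) ^ m + 1"
proof (induction m)
  case 0
  have "rep_words V 0 s t = {[]}" by (auto simp: rep_words_def words_def)
  then show ?case by simp
next
  case (Suc m)
  have "2 \<le> card V"
    using assms card_mono[of V "{s,t}"] by auto
  then have "real (card (rep_words V (Suc m) s t)) =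
             (real (card V) - 2) * real (card V) ^ m + real (card (rep_words V m s t))"
    using card_rep_words_Suc[OF assms, of m] by (simp add: of_nat_diff)
  then show ?case
    using Suc by (simp only:) (simp add: algebra_simps)
qed

section \<open>Edge weightings of trees\<close>

definition incident :: "('v \<times> 'v) set \<Rightarrow> 'v \<Rightarrow> ('v \<times> 'v) set" where
  "incident F v = {e \<in> F. v = fst e \<or> v = snd e}"

definition perfect_matching :: "'v set \<Rightarrow> ('v \<times> 'v) set \<Rightarrow> ('v \<times> 'v) set \<Rightarrow> bool" where
  "perfect_matching V E F \<longleftrightarrow> F \<subseteq> E \<and> (\<forall>v\<in>V. card (incident F v) = 1)"

lemma tree_has_perfect_matching_iff:
  "tree_has_perfect_matching V E \<longleftrightarrow> (\<exists>F. perfect_matching V E F)"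
  by (auto simp: tree_has_perfect_matching_def perfect_matching_def incident_def)

lemma oriented_treeD:
  assumes "oriented_tree V E"
  shows "finite V" "finite E" "E \<subseteq> V \<times> V" "(s,t) \<in> E \<Longrightarrow> s \<noteq> t"
    "x \<in> V \<Longrightarrow> y \<in> V \<Longrightarrow> (x,y) \<in> (E \<union> E\<inverse>)\<^sup>*" "card E = card V - 1"
  using assms finite_subset[of E "V \<times> V"] unfolding oriented_tree_def by auto

lemma sum_card_incident:
  assumes "finite D" "finite U" "\<forall>e\<in>D. fst e \<noteq> snd e \<and> fst e \<in> U \<and> snd e \<in> U"
  shows "(\<Sum>v\<in>U. card (incident D v)) = 2 * card D"
proof -
  have "card {v\<in>U. v = fst e \<or> v = snd e} = 2" if "e \<in> D" for e
  proof -
    have "{v\<in>U. v = fst e \<or> v = snd e} = {fst e, snd e}" "fst e \<noteq> snd e"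
      using assms(3) that by auto
    then show ?thesis by simp
  qed
  then show ?thesis
    unfolding incident_def by (intro sum_multicount assms(2,1)) blast
qed

lemma sum_incident_indicator:
  assumes "finite E" "F \<subseteq> E"
  shows "(\<Sum>e\<in>incident E v. if e \<in> F then c else 0) = c * card (incident F v)"
proof -
  have "{e \<in> incident E v. e \<in> F} = incident F v"
    using assms(2) by (auto simp: incident_def)
  moreover have "finite (incident E v)"
    using assms(1) by (simp add: incident_def)
  ultimately show ?thesis
    by (simp add: sum.inter_filter[symmetric])
qed

lemma rtrancl_leaves_set:
  "(a,b) \<in> R\<^sup>* \<Longrightarrow> a \<in> W \<Longrightarrow> b \<notin> W \<Longrightarrow> \<exists>p q. (p,q) \<in> R \<and> p \<in> W \<and> q \<notin> W"
proof (induction rule: rtrancl_induct)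
  case (step y z)
  then show ?case by (cases "y \<in> W") auto
qed simp

(* every vertex outside W is reached from W, and each newly reached vertex uses a new edge *)
lemma connected_card_outside_le:
  assumes "finite V" "E \<subseteq> V \<times> V" "\<forall>x\<in>V. \<forall>y\<in>V. (x,y) \<in> (E \<union> E\<inverse>)\<^sup>*"
    and "W \<subseteq> V" "W \<noteq> {}"
  shows "card (V - W) \<le> card {e\<in>E. fst e \<notin> W \<or> snd e \<notin> W}"
  using assms(4,5)
proof (induction "card (V - W)" arbitrary: W)
  case (Suc j)
  obtain x w where "x \<in> V - W" "w \<in> W"
    using Suc.hyps(2) Suc.prems(2) by (metis all_not_in_conv card.empty nat.distinct(1))
  then obtain p q where pq: "(p,q) \<in> E \<union> E\<inverse>" "p \<in> W" "q \<notin> W"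
    using assms(3) Suc.prems(1) rtrancl_leaves_set[of w x "E \<union> E\<inverse>" W] by blast
  define e where "e = (if (p,q) \<in> E then (p,q) else (q,p))"
  have e: "e \<in> E" "{fst e, snd e} = {p,q}"
    using pq(1) by (auto simp: e_def)
  have q: "q \<in> V"
    using pq(1) assms(2) by auto
  let ?out = "\<lambda>W. {e\<in>E. fst e \<notin> W \<or> snd e \<notin> W}"
  have "card (V - insert q W) = j"
    using Suc.hyps(2) q pq(3) assms(1) by (simp add: Diff_insert2[symmetric] card_Diff_singleton)
  moreover have "card (V - insert q W) \<le> card (?out (insert q W))"
    by (rule Suc.hyps(1)) (use Suc.prems q \<open>card (V - insert q W) = j\<close> in auto)
  ultimately have "j \<le> card (?out (insert q W))"
    by simp
  moreover have "insert e (?out (insert q W)) \<subseteq> ?out W" "e \<notin> ?out (insert q W)"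
    using e pq(2,3) by (auto simp: doubleton_eq_iff)
  moreover have "finite (?out W)"
    using assms(1,2) finite_subset by (auto intro: finite_subset[of _ "V \<times> V"])
  ultimately show ?case
    using Suc.hyps(2) card_mono[of "?out W" "insert e (?out (insert q W))"]
    by (simp add: finite_subset[of _ "?out W"])
qed simp

lemma tree_card_edges_inside_less:
  assumes "oriented_tree V E" "D \<subseteq> E" "U \<subseteq> V" "U \<noteq> {}"
    and "\<forall>e\<in>D. fst e \<in> U \<and> snd e \<in> U"
  shows "card D < card U"
proof -
  note tree = oriented_treeD[OF assms(1)]
  have "card (V - U) \<le> card {e\<in>E. fst e \<notin> U \<or> snd e \<notin> U}"
    using connected_card_outside_le[OF tree(1,3) _ assms(3,4)] tree(5) by blast
  also have "\<dots> \<le> card (E - D)"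
    using assms(5) tree(2) by (intro card_mono) auto
  finally have "card V - card U \<le> card E - card D"
    using tree(1,2) assms(2,3) by (simp add: card_Diff_subset finite_subset)
  moreover have "card U \<le> card V" "card D \<le> card E" "card U > 0"
    using tree(1,2) assms(2-4) by (auto simp: card_mono card_gt_0_iff finite_subset)
  ultimately show ?thesis
    using tree(6) by linarith
qed

lemma tree_edge_set_has_leaf:
  assumes "oriented_tree V E" "D \<subseteq> E" "D \<noteq> {}"
  shows "\<exists>v\<in>V. card (incident D v) = 1"
proof (rule ccontr)
  assume no_leaf: "\<not> ?thesis"
  note tree = oriented_treeD[OF assms(1)]
  define U where "U = {v\<in>V. incident D v \<noteq> {}}"
  have finD: "finite D"
    using assms(2) tree(2) finite_subset by blast
  have D_inside: "\<forall>e\<in>D. fst e \<noteq> snd e \<and> fst e \<in> U \<and> snd e \<in> U"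
    using assms(2) tree(3,4) by (fastforce simp: U_def incident_def)
  have "U \<subseteq> V" "U \<noteq> {}"
    using assms(3) D_inside by (auto simp: U_def)
  then have less: "card D < card U"
    using tree_card_edges_inside_less[OF assms(1,2)] D_inside by blast
  have "2 \<le> card (incident D v)" if "v \<in> U" for v
  proof -
    have "incident D v \<noteq> {}" "finite (incident D v)" "card (incident D v) \<noteq> 1"
      using that no_leaf finD by (auto simp: U_def incident_def)
    then have "card (incident D v) \<noteq> 0" "card (incident D v) \<noteq> 1"
      by simp_all
    then show ?thesis by linarith
  qed
  then have "(\<Sum>v\<in>U. 2) \<le> (\<Sum>v\<in>U. card (incident D v))"
    by (rule sum_mono)
  then have "2 * card U \<le> (\<Sum>v\<in>U. card (incident D v))"
    by simp
  also have "\<dots> = 2 * card D"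
    using sum_card_incident[OF finD _ D_inside] tree(1) \<open>U \<subseteq> V\<close> finite_subset by blast
  finally show False
    using less by simp
qed

lemma sum_ne_if_one_term_strictly_between:
  fixes m :: "'a \<Rightarrow> nat"
  assumes "finite A" "a \<in> A" "0 < m a" "m a < c" "\<forall>x\<in>A - {a}. m x = 0 \<or> m x = c"
  shows "sum m A \<noteq> c"
proof (cases "\<exists>x\<in>A - {a}. m x = c")
  case True
  then obtain x where "x \<in> A - {a}" "m x = c"
    by blast
  then have "c \<le> sum m (A - {a})"
    using assms(1) member_le_sum[of x "A - {a}" m] by simp
  then show ?thesis
    using sum.remove[OF assms(1,2), of m] assms(3) by simp
next
  case False
  then have "sum m (A - {a}) = 0"
    using assms(1,5) by simp
  then show ?thesis
    using sum.remove[OF assms(1,2), of m] assms(4) by simp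
qed

(* the edges of weight strictly between 0 and c would span a forest, and at a leaf of it the
   vertex sum cannot be c *)
lemma tree_constant_vertex_sums:
  fixes m :: "'v \<times> 'v \<Rightarrow> nat"
  assumes tree: "oriented_tree V E" and sums: "\<forall>v\<in>V. sum m (incident E v) = c" and "e \<in> E"
  shows "m e = 0 \<or> m e = c"
proof (rule ccontr)
  assume neither: "\<not> (m e = 0 \<or> m e = c)"
  note T = oriented_treeD[OF tree]
  have finite_incident: "finite (incident E v)" for v
    using T(2) by (simp add: incident_def)
  have le_c: "m e' \<le> c" if "e' \<in> E" for e'
  proof -
    have "m e' \<le> sum m (incident E (fst e'))"
      using that finite_incident by (intro member_le_sum) (auto simp: incident_def)
    then show ?thesis
      using that T(3) sums by auto
  qed
  define D where "D = {e\<in>E. 0 < m e \<and> m e < c}"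
  have "e \<in> D"
    using neither \<open>e \<in> E\<close> le_c[of e] by (simp add: D_def)
  then have "D \<noteq> {}" by blast
  then obtain v where v: "v \<in> V" "card (incident D v) = 1"
    using tree_edge_set_has_leaf[OF tree, of D] by (auto simp: D_def)
  then obtain e1 where e1: "incident D v = {e1}"
    by (auto simp: card_Suc_eq)
  have e1E: "e1 \<in> incident E v" "0 < m e1" "m e1 < c"
    using e1 by (auto simp: incident_def D_def)
  have others: "\<forall>e'\<in>incident E v - {e1}. m e' = 0 \<or> m e' = c"
    using e1 le_c by (fastforce simp: incident_def D_def)
  have "sum m (incident E v) \<noteq> c"
    by (rule sum_ne_if_one_term_strictly_between[of "incident E v" e1 m c, OF finite_incident e1E others])
  then show False
    using sums v(1) by blast
qed

lemma tree_perfect_matching_unique: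
  assumes tree: "oriented_tree V E" and "perfect_matching V E F1" "perfect_matching V E F2"
  shows "F1 = F2"
proof -
  note T = oriented_treeD[OF tree]
  define m where "m e = (if e \<in> F1 then 1 else 0) + (if e \<in> F2 then 1 else (0::nat))" for e
  have "\<forall>v\<in>V. sum m (incident E v) = 2"
    using assms(2,3) unfolding m_def perfect_matching_def
    by (simp add: sum.distrib sum_incident_indicator[OF T(2)])
  then have weight_values: "m e = 0 \<or> m e = 2" if "e \<in> E" for e
    using tree_constant_vertex_sums[OF tree] that by blast
  have "e \<in> F1 \<longleftrightarrow> e \<in> F2" if "e \<in> E" for e
    using weight_values[OF that] by (cases "e \<in> F1"; cases "e \<in> F2") (auto simp: m_def)
  then show ?thesis
    using assms(2,3) unfolding perfect_matching_def by blast
qed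

lemma perfect_matching_card:
  assumes "oriented_tree V E" "perfect_matching V E F"
  shows "2 * card F = card V"
proof -
  note T = oriented_treeD[OF assms(1)]
  have "F \<subseteq> E" "\<forall>v\<in>V. card (incident F v) = 1"
    using assms(2) by (auto simp: perfect_matching_def)
  then show ?thesis
    using sum_card_incident[of F V] T(1-4) finite_subset by fastforce
qed

lemma perfect_matching_incident_unique:
  assumes "perfect_matching V E F" "v \<in> V" "e1 \<in> incident F v" "e2 \<in> incident F v"
  shows "e1 = e2"
proof -
  have "card (incident F v) = 1"
    using assms(1,2) by (simp add: perfect_matching_def)
  then obtain x where "incident F v = {x}"
    by (rule card_1_singletonE)
  then show ?thesis
    using assms(3,4) by simp
qed

section \<open>Perfect matchings of the Schreier graph\<close>

lemma card_doubleton_Int_eq_1_iff: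
  "a \<noteq> b \<Longrightarrow> card ({a,b} \<inter> M) = 1 \<longleftrightarrow> (a \<in> M \<longleftrightarrow> b \<notin> M)"
  by (cases "a \<in> M"; cases "b \<in> M") (auto simp: Int_insert_left)

lemma card_fibrewise_relations:
  assumes "finite F" "\<And>e A. e \<in> F \<Longrightarrow> P e A \<Longrightarrow> A \<subseteq> X"
  shows "card {M. M \<subseteq> X \<times> F \<and> (\<forall>e\<in>F. P e {u. (u,e) \<in> M})} = (\<Prod>e\<in>F. card {A. P e A})"
proof -
  let ?fibres = "\<lambda>M. \<lambda>e\<in>F. {u. (u,e) \<in> M}"
  have "bij_betw ?fibres {M. M \<subseteq> X \<times> F \<and> (\<forall>e\<in>F. P e {u. (u,e) \<in> M})} (\<Pi>\<^sub>E e\<in>F. {A. P e A})"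
  proof (rule bij_betw_byWitness[where f' = "\<lambda>\<Phi>. {(u,e). e \<in> F \<and> u \<in> \<Phi> e}"])
    show "\<forall>\<Phi>\<in>\<Pi>\<^sub>E e\<in>F. {A. P e A}. ?fibres {(u,e). e \<in> F \<and> u \<in> \<Phi> e} = \<Phi>"
    proof
      fix \<Phi> assume \<Phi>: "\<Phi> \<in> (\<Pi>\<^sub>E e\<in>F. {A. P e A})"
      show "?fibres {(u,e). e \<in> F \<and> u \<in> \<Phi> e} = \<Phi>"
      proof
        fix e
        show "?fibres {(u,e). e \<in> F \<and> u \<in> \<Phi> e} e = \<Phi> e"
          using PiE_arb[OF \<Phi>, of e] by (cases "e \<in> F") auto
      qed
    qed
    show "(\<lambda>\<Phi>. {(u,e). e \<in> F \<and> u \<in> \<Phi> e}) ` (\<Pi>\<^sub>E e\<in>F. {A. P e A})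
          \<subseteq> {M. M \<subseteq> X \<times> F \<and> (\<forall>e\<in>F. P e {u. (u,e) \<in> M})}"
    proof clarify
      fix \<Phi> assume \<Phi>: "\<Phi> \<in> (\<Pi>\<^sub>E e\<in>F. {A. P e A})"
      have "\<Phi> e \<subseteq> X" if "e \<in> F" for e
        using assms(2)[OF that] \<Phi> that by blast
      moreover have "{u. (u,e) \<in> {(u,e). e \<in> F \<and> u \<in> \<Phi> e}} = \<Phi> e" if "e \<in> F" for e
        using that by simp
      ultimately show "{(u,e). e \<in> F \<and> u \<in> \<Phi> e} \<subseteq> X \<times> F \<and>
          (\<forall>e\<in>F. P e {u. (u,e) \<in> {(u,e). e \<in> F \<and> u \<in> \<Phi> e}})"
        using \<Phi> by auto
    qed
  qed auto
  then show ?thesis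
    by (simp add: bij_betw_same_card card_PiE[OF assms(1)])
qed

definition label_count :: "('v list \<times> ('v \<times> 'v)) set \<Rightarrow> 'v \<times> 'v \<Rightarrow> nat" where
  "label_count M e = card {ue \<in> M. snd ue = e}"

lemma label_count_eq_0_iff: "finite M \<Longrightarrow> label_count M e = 0 \<longleftrightarrow> e \<notin> snd ` M"
proof -
  assume "finite M"
  then have "label_count M e = 0 \<longleftrightarrow> {ue \<in> M. snd ue = e} = {}"
    by (simp add: label_count_def)
  also have "\<dots> \<longleftrightarrow> e \<notin> snd ` M"
    unfolding Collect_empty_eq image_iff by blast
  finally show ?thesis .
qed

lemma schreier_perfect_matching_moved:
  "schreier_perfect_matching V E n M \<Longrightarrow> M \<subseteq> {(u,e). e \<in> E \<and> u \<in> moved_words V n e}"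
  by (auto simp: schreier_perfect_matching_def schreier_edges_def moved_words_def)

lemma finite_schreier_perfect_matching:
  assumes "oriented_tree V E" "schreier_perfect_matching V E n M"
  shows "finite M"
proof (rule finite_subset)
  show "M \<subseteq> words V n \<times> E"
    using assms(2) by (simp add: schreier_perfect_matching_def schreier_edges_def)
  show "finite (words V n \<times> E)"
    using oriented_treeD(1,2)[OF assms(1)] finite_words by blast
qed

lemma card_hd_words:
  assumes "finite V" "v \<in> V"
  shows "card {w \<in> words V (Suc m). hd w = v} = card V ^ m"
proof -
  have "{w \<in> words V (Suc m). hd w = v} = (#) v ` words V m"
    using assms(2) by (auto simp: words_Suc)
  then show ?thesis
    by (simp add: card_image card_words[OF assms(1)])
qed

lemma card_endpoints_hd:
  assumes "s \<noteq> t" "u \<in> moved_words V n (s,t)"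
  shows "card {w \<in> endpoints (u,(s,t)). hd w = v} = (if v = s \<or> v = t then 1 else 0)"
proof -
  have u: "u \<noteq> []" "hd u \<in> {s,t}"
    using assms(2) by (simp_all add: moved_words_eq[OF assms(1)])
  then have "hd (act (s,t) u) = (if hd u = s then t else s)"
    using hd_act[OF assms(1)] by blast
  then have "{w \<in> endpoints (u,(s,t)). hd w = v} =
             (if v = s \<or> v = t then {if hd u = v then u else act (s,t) u} else {})"
    using u assms(1) by (auto simp: endpoints_def)
  then show ?thesis by simp
qed

lemma schreier_perfect_matching_label_sums:
  assumes tree: "oriented_tree V E" and M: "schreier_perfect_matching V E (Suc m) M" and "v \<in> V"
  shows "sum (label_count M) (incident E v) = card V ^ m"
proof -
  note T = oriented_treeD[OF tree]
  let ?W = "{w \<in> words V (Suc m). hd w = v}"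
  have finite: "finite M" "finite ?W"
    using finite_schreier_perfect_matching[OF tree M] finite_words[OF T(1)] by auto
  have M_moved: "ue \<in> M \<Longrightarrow> ue \<in> {(u,e). e \<in> E \<and> u \<in> moved_words V (Suc m) e}" for ue
    using schreier_perfect_matching_moved[OF M] by blast
  have "card V ^ m = (\<Sum>w\<in>?W. card {ue\<in>M. w \<in> endpoints ue})"
    using M card_hd_words[OF T(1) \<open>v \<in> V\<close>] by (simp add: schreier_perfect_matching_def)
  also have "\<dots> = (\<Sum>ue\<in>M. card {w\<in>?W. w \<in> endpoints ue})"
    by (rule sum_multicount_gen) (use finite in auto)
  also have "\<dots> = (\<Sum>ue\<in>M. if snd ue \<in> incident E v then 1 else 0)"
  proof (rule sum.cong[OF refl])
    fix ue assume "ue \<in> M"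
    then obtain u s t where ue: "ue = (u,(s,t))" "(s,t) \<in> E" "u \<in> moved_words V (Suc m) (s,t)"
      using M_moved by (cases ue) auto
    have "{w\<in>?W. w \<in> endpoints ue} = {w \<in> endpoints ue. hd w = v}"
      using ue T(3) act_in_words[of u V "Suc m" s t] by (auto simp: endpoints_def moved_words_def)
    then show "card {w\<in>?W. w \<in> endpoints ue} = (if snd ue \<in> incident E v then 1 else 0)"
      using card_endpoints_hd[OF T(4) ue(3)] ue(1,2) by (auto simp: incident_def)
  qed
  also have "\<dots> = card {ue\<in>M. snd ue \<in> incident E v}"
    using finite(1) by (simp add: sum.inter_filter[symmetric])
  also have "{ue\<in>M. snd ue \<in> incident E v} = (\<Union>e\<in>incident E v. {ue\<in>M. snd ue = e})"
    by auto
  also have "card \<dots> = sum (label_count M) (incident E v)"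
    unfolding label_count_def using finite(1) T(2)
    by (intro card_UN_disjoint) (auto simp: incident_def)
  finally show ?thesis by (rule sym)
qed

lemma schreier_perfect_matching_labels:
  assumes tree: "oriented_tree V E" and M: "schreier_perfect_matching V E (Suc m) M"
  shows "perfect_matching V E (snd ` M)"
proof -
  note T = oriented_treeD[OF tree]
  let ?c = "card V ^ m"
  have c_pos: "?c > 0" if "v \<in> V" for v
    using that T(1) by (auto simp: card_gt_0_iff)
  have labels: "snd ` M \<subseteq> E"
    using schreier_perfect_matching_moved[OF M] by auto
  have sums: "\<forall>v\<in>V. sum (label_count M) (incident E v) = ?c"
    using schreier_perfect_matching_label_sums[OF tree M] by blast
  have count: "label_count M e = (if e \<in> snd ` M then ?c else 0)" if "e \<in> E" for e
  proof -
    have "label_count M e = 0 \<or> label_count M e = ?c"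
      by (rule tree_constant_vertex_sums[OF tree sums that])
    moreover have "label_count M e = 0 \<longleftrightarrow> e \<notin> snd ` M"
      using label_count_eq_0_iff finite_schreier_perfect_matching[OF tree M] by blast
    moreover have "fst e \<in> V"
      using that T(3) by (cases e) auto
    ultimately show ?thesis
      using c_pos[OF \<open>fst e \<in> V\<close>] by auto
  qed
  have sum_eq: "sum (label_count M) (incident E v) = ?c * card (incident (snd ` M) v)" for v
  proof -
    have "sum (label_count M) (incident E v) = (\<Sum>e\<in>incident E v. if e \<in> snd ` M then ?c else 0)"
      by (intro sum.cong refl count) (simp add: incident_def)
    also have "\<dots> = ?c * card (incident (snd ` M) v)"
      by (rule sum_incident_indicator[OF T(2) labels])
    finally show ?thesis .
  qed
  have "card (incident (snd ` M) v) = 1" if "v \<in> V" for v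
  proof -
    have "?c * card (incident (snd ` M) v) = ?c * 1"
      using sums that sum_eq[of v] by auto
    then show ?thesis
      using c_pos[OF that] by (simp only: mult_left_cancel[OF gr_implies_not0])
  qed
  with labels show ?thesis
    by (simp add: perfect_matching_def)
qed

lemma matching_edges_at_act:
  assumes tree: "oriented_tree V E" and F: "perfect_matching V E F"
    and M: "M \<subseteq> {(u,e). e \<in> F \<and> u \<in> moved_words V n e}"
    and e: "e \<in> F" and u: "u \<in> moved_words V n e"
  shows "{ue \<in> M. act e u \<in> endpoints ue} = {(act e u, e), (u,e)} \<inter> M"
proof (intro equalityI subsetI)
  fix ue assume ue: "ue \<in> {ue \<in> M. act e u \<in> endpoints ue}"
  obtain s t where st: "e = (s,t)" by fastforce
  obtain u' s' t' where ue': "ue = (u',(s',t'))" "(s',t') \<in> F" "u' \<in> moved_words V n (s',t')"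
    using ue M by auto
  have E: "s \<noteq> t" "s \<in> V" "t \<in> V" "s' \<noteq> t'"
    using e ue'(2) F oriented_treeD(3,4)[OF tree] st by (auto simp: perfect_matching_def)
  have w: "act e u \<in> moved_words V n (s,t)"
    using act_in_moved_words[OF E(2,3,1)] u st by simp
  have "hd (act e u) \<in> {s',t'}"
    using ue ue'(1) hd_act[of s' t' u'] ue'(3) E(4) by (auto simp: endpoints_def moved_words_eq)
  moreover have "hd (act e u) \<in> {s,t}" "hd (act e u) \<in> V"
    using w E(1) by (auto simp: moved_words_eq words_def)
  ultimately have "(s',t') \<in> incident F (hd (act e u))" "e \<in> incident F (hd (act e u))"
    using ue'(2) e st by (auto simp: incident_def)
  then have e': "(s',t') = e"
    using perfect_matching_incident_unique[OF F \<open>hd (act e u) \<in> V\<close>] by blast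
  have "act e u = u' \<or> act e u = act e u'"
    using ue ue'(1) e' by (simp add: endpoints_def)
  then have "u' = act e u \<or> u' = u"
    using injD[OF inj_act[OF E(1)]] unfolding st by blast
  moreover have "ue \<in> M" "ue = (u',e)"
    using ue ue'(1) e' by simp_all
  ultimately show "ue \<in> {(act e u, e), (u,e)} \<inter> M"
    by blast
next
  fix ue assume "ue \<in> {(act e u, e), (u,e)} \<inter> M"
  then show "ue \<in> {ue \<in> M. act e u \<in> endpoints ue}"
    unfolding endpoints_def by auto
qed

lemma card_matching_edges_at_act_eq_1_iff:
  assumes "oriented_tree V E" "perfect_matching V E F"
    and "M \<subseteq> {(u,e). e \<in> F \<and> u \<in> moved_words V n e}" "e \<in> F" "u \<in> moved_words V n e"
  shows "card {ue \<in> M. act e u \<in> endpoints ue} = 1 \<longleftrightarrow> ((act e u, e) \<in> M \<longleftrightarrow> (u,e) \<notin> M)"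
  using assms(5) matching_edges_at_act[OF assms] card_doubleton_Int_eq_1_iff[of "(act e u, e)" "(u,e)" M]
  by (simp add: moved_words_def)

lemma obtain_act_preimage:
  assumes tree: "oriented_tree V E" and F: "perfect_matching V E F" and w: "w \<in> words V (Suc m)"
  obtains e u where "e \<in> F" "u \<in> moved_words V (Suc m) e" "act e u = w"
proof -
  obtain x w' where w': "w = x # w'" "x \<in> V"
    using w by (auto simp: words_Suc)
  then have "card (incident F x) = 1"
    using F by (simp add: perfect_matching_def)
  then obtain e where "incident F x = {e}"
    by (rule card_1_singletonE)
  then have "e \<in> F" "x = fst e \<or> x = snd e"
    unfolding incident_def by blast+
  then obtain s t where e: "(s,t) \<in> F" "x \<in> {s,t}"
    by (cases e) auto
  then have st: "s \<in> V" "t \<in> V" "s \<noteq> t"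
    using F oriented_treeD(3,4)[OF tree] by (auto simp: perfect_matching_def)
  have "w \<in> moved_words V (Suc m) (s,t)"
    using w w'(1) e(2) st(3) by (simp add: moved_words_eq)
  also have "\<dots> = act (s,t) ` moved_words V (Suc m) (s,t)"
    using bij_act_moved_words[OF oriented_treeD(1)[OF tree] st] by (simp add: bij_betw_def)
  finally obtain u where "u \<in> moved_words V (Suc m) (s,t)" "act (s,t) u = w"
    by blast
  then show thesis
    using that e(1) by blast
qed

lemma schreier_perfect_matching_imp_alternating:
  assumes tree: "oriented_tree V E" and F: "perfect_matching V E F"
    and M: "schreier_perfect_matching V E (Suc m) M"
  shows "M \<subseteq> words V (Suc m) \<times> F \<and> (\<forall>e\<in>F. alternating V (Suc m) e {u. (u,e) \<in> M})"
proof -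
  have "snd ` M = F"
    using tree_perfect_matching_unique[OF tree schreier_perfect_matching_labels[OF tree M] F] .
  then have M_moved: "M \<subseteq> {(u,e). e \<in> F \<and> u \<in> moved_words V (Suc m) e}"
    using schreier_perfect_matching_moved[OF M] by force
  have "(act e u, e) \<in> M \<longleftrightarrow> (u,e) \<notin> M" if e: "e \<in> F" and u: "u \<in> moved_words V (Suc m) e" for e u
  proof -
    obtain s t where st: "e = (s,t)"
      by fastforce
    then have "s \<in> V" "t \<in> V"
      using e F oriented_treeD(3)[OF tree] by (auto simp: perfect_matching_def)
    then have "act e u \<in> words V (Suc m)"
      using u act_in_words[of u V "Suc m" s t] st by (simp add: moved_words_def)
    then have "card {ue \<in> M. act e u \<in> endpoints ue} = 1"
      using M by (simp add: schreier_perfect_matching_def)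
    then show ?thesis
      using card_matching_edges_at_act_eq_1_iff[OF tree F M_moved e u] by simp
  qed
  with M_moved show ?thesis
    by (auto simp: alternating_def moved_words_def)
qed

lemma alternating_imp_schreier_perfect_matching:
  assumes tree: "oriented_tree V E" and F: "perfect_matching V E F"
    and "M \<subseteq> words V (Suc m) \<times> F" and alt: "\<forall>e\<in>F. alternating V (Suc m) e {u. (u,e) \<in> M}"
  shows "schreier_perfect_matching V E (Suc m) M"
proof -
  have M_moved: "M \<subseteq> {(u,e). e \<in> F \<and> u \<in> moved_words V (Suc m) e}"
    using assms(3) alt by (auto simp: alternating_def)
  have "card {ue \<in> M. w \<in> endpoints ue} = 1" if w: "w \<in> words V (Suc m)" for w
  proof -
    obtain e u where e: "e \<in> F" and u: "u \<in> moved_words V (Suc m) e" and w_eq: "act e u = w"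
      using obtain_act_preimage[OF tree F w] .
    have "(act e u, e) \<in> M \<longleftrightarrow> (u,e) \<notin> M"
      using alt e u by (simp add: alternating_def)
    then show ?thesis
      using card_matching_edges_at_act_eq_1_iff[OF tree F M_moved e u] w_eq by simp
  qed
  moreover have "M \<subseteq> schreier_edges V E (Suc m)"
    using M_moved F by (auto simp: schreier_edges_def moved_words_def perfect_matching_def)
  ultimately show ?thesis
    using M_moved by (auto simp: schreier_perfect_matching_def moved_words_def)
qed

lemma schreier_perfect_matching_iff_alternating:
  assumes "oriented_tree V E" "perfect_matching V E F"
  shows "schreier_perfect_matching V E (Suc m) M \<longleftrightarrow>
    M \<subseteq> words V (Suc m) \<times> F \<and> (\<forall>e\<in>F. alternating V (Suc m) e {u. (u,e) \<in> M})"
  using schreier_perfect_matching_imp_alternating[OF assms] alternating_imp_schreier_perfect_matching[OF assms]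
  by blast

lemma card_alternating_powr:
  assumes "finite V" "s \<in> V" "t \<in> V" "s \<noteq> t"
  shows "real (card {A. alternating V (Suc m) (s,t) A}) =
    2 powr ((real (card V) ^ Suc m - 2 * real (card V) ^ m + 1) / (real (card V) - 1))"
proof -
  have reps: "card (rep_words V (Suc m) s t \<inter> moved_words V (Suc m) (s,t)) = card (rep_words V m s t)"
    using rep_words_Int_moved_words[OF assms(4,3)] by (simp add: card_image)
  have "real (card V) - 1 > 0"
    using assms card_mono[of V "{s,t}"] by auto
  then have "(real (card V) ^ Suc m - 2 * real (card V) ^ m + 1) / (real (card V) - 1) =
             real (card (rep_words V m s t))"
    using card_rep_words[OF assms, of m] by (simp add: divide_eq_eq)
  then show ?thesis
    using card_alternating[OF assms, of "Suc m"] reps by (simp add: powr_realpow)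
qed

lemma card_schreier_perfect_matchings:
  assumes tree: "oriented_tree V E" and F: "perfect_matching V E F"
  shows "real (card {M. schreier_perfect_matching V E (Suc m) M}) =
    2 powr (real (card F) * ((real (card V) ^ Suc m - 2 * real (card V) ^ m + 1) / (real (card V) - 1)))"
proof -
  note T = oriented_treeD[OF tree]
  let ?x = "(real (card V) ^ Suc m - 2 * real (card V) ^ m + 1) / (real (card V) - 1)"
  have edges: "e \<in> F \<Longrightarrow> e \<in> V \<times> V \<and> fst e \<noteq> snd e" for e
    using F T(3,4) by (auto simp: perfect_matching_def)
  have "finite F"
    using F T(2) by (auto simp: perfect_matching_def intro: finite_subset)
  have "{M. schreier_perfect_matching V E (Suc m) M} =
        {M. M \<subseteq> words V (Suc m) \<times> F \<and> (\<forall>e\<in>F. alternating V (Suc m) e {u. (u,e) \<in> M})}"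
    using schreier_perfect_matching_iff_alternating[OF tree F] by blast
  also have "card \<dots> = (\<Prod>e\<in>F. card {A. alternating V (Suc m) e A})"
    by (rule card_fibrewise_relations[OF \<open>finite F\<close>]) (auto simp: alternating_def moved_words_def)
  finally have "real (card {M. schreier_perfect_matching V E (Suc m) M}) =
                (\<Prod>e\<in>F. real (card {A. alternating V (Suc m) e A}))"
    by simp
  also have "\<dots> = (\<Prod>e\<in>F. 2 powr ?x)"
  proof (rule prod.cong[OF refl])
    fix e assume "e \<in> F"
    then show "real (card {A. alternating V (Suc m) e A}) = 2 powr ?x"
      using edges card_alternating_powr[OF T(1)] by (cases e) auto
  qed
  also have "\<dots> = 2 powr (real (card F) * ?x)"
    by (simp add: powr_power)
  finally show ?thesis .
qed

theorem theorem3p4: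
  fixes V :: "'v set" and E :: "('v \<times> 'v) set" and k n :: nat
  assumes "oriented_tree V E"
    and "card V = k" and "k \<ge> 2" and "n \<ge> 1"
  shows "(tree_has_perfect_matching V E \<longrightarrow>
            real (card {M. schreier_perfect_matching V E n M}) =
              2 powr (real k / (2 * (real k - 1)) *
                      (real k ^ n - 2 * real k ^ (n - 1) + 1)))
       \<and> (\<not> tree_has_perfect_matching V E \<longrightarrow>
            {M. schreier_perfect_matching V E n M} = {})"
proof -
  obtain m where n: "n = Suc m"
    using assms(4) by (cases n) auto
  have "real (card {M. schreier_perfect_matching V E n M}) =
          2 powr (real k / (2 * (real k - 1)) * (real k ^ n - 2 * real k ^ (n - 1) + 1))"
    if F: "perfect_matching V E F" for F
  proof -
    have card_F: "real (card F) = real k / 2"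
      using perfect_matching_card[OF assms(1) F] assms(2) by linarith
    have exponent: "real k / 2 * (x / (real k - 1)) = real k / (2 * (real k - 1)) * x" for x
      by simp
    show ?thesis
      using card_schreier_perfect_matchings[OF assms(1) F, of m]
      unfolding card_F assms(2) exponent n by simp
  qed
  moreover have "{M. schreier_perfect_matching V E n M} = {}" if "\<not> tree_has_perfect_matching V E"
    using that schreier_perfect_matching_labels[OF assms(1)] tree_has_perfect_matching_iff n by blast
  ultimately show ?thesis
    using tree_has_perfect_matching_iff by blast
qed

end
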